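(* If $\mathbb{A}_\Gamma$ is a non-abelian right-angled Artin group (with $\Gamma$ a finite simplicial graph), then $\mathrm{Aut}(\mathbb{A}_\Gamma)$ involves all finite groups.
   Context: $\mathbb{A}_\Gamma$ has the vertices of $\Gamma$ as generators and relations $[u,v]=1$ for each edge. A group $G$ involves all finite groups if every finite group is a quotient of some finite index subgroup of $G$. *)

theory Defs
  imports "HOL-Algebra.Algebra"
begin

text \<open>Words are lists of letters (v, b), where
  (v, True) stands for the generator v and (v, False) for its inverse.\<close>

inductive_set raag_step :: "'v set \<Rightarrow> ('v \<Rightarrow> 'v \<Rightarrow> bool)
    \<Rightarrow> (('v \<times> bool) list \<times> ('v \<times> bool) list) set"
  for V E where
  cancel: "x \<in> V \<Longrightarrow> (u @ [(x, b), (x, \<not> b)] @ w, u @ w) \<in> raag_step V E"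
| commute: "E x y \<Longrightarrow> (u @ [(x, b), (y, c)] @ w, u @ [(y, c), (x, b)] @ w) \<in> raag_step V E"

definition raag_rel :: "'v set \<Rightarrow> ('v \<Rightarrow> 'v \<Rightarrow> bool)
    \<Rightarrow> (('v \<times> bool) list \<times> ('v \<times> bool) list) set" where
  "raag_rel V E = (raag_step V E \<union> (raag_step V E)\<inverse>)\<^sup>*"

definition raag_words :: "'v set \<Rightarrow> ('v \<times> bool) list set" where
  "raag_words V = {w. set w \<subseteq> V \<times> UNIV}"

definition RAAG :: "'v set \<Rightarrow> ('v \<Rightarrow> 'v \<Rightarrow> bool) \<Rightarrow> ('v \<times> bool) list set monoid" where
  "RAAG V E = \<lparr> carrier = raag_words V // raag_rel V E,
      monoid.mult = (\<lambda>A B. \<Union>a\<in>A. \<Union>b\<in>B. raag_rel V E `` {a @ b}),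
      monoid.one = raag_rel V E `` {[]} \<rparr>"

text \<open>G involves all finite groups: every finite group is a quotient of a
  finite-index subgroup of G. Finite groups are represented (up to isomorphism)
  by groups with carrier a subset of nat.\<close>
definition involves_all_finite_groups :: "('a, 'b) monoid_scheme \<Rightarrow> bool" where
  "involves_all_finite_groups G \<longleftrightarrow>
     (\<forall>F :: nat monoid. group F \<and> finite (carrier F) \<longrightarrow>
        (\<exists>H. subgroup H G \<and> finite (rcosets\<^bsub>G\<^esub> H) \<and>
           (\<exists>h. h \<in> hom (G\<lparr>carrier := H\<rparr>) F \<and> h ` H = carrier F)))"

end

theory Submission
  imports Defs
begin

text \<open>Since the group is not abelian, the graph has two distinct non-adjacent vertices u, v.
  Given a finite group F of order n, put N = n + 1. Sending u to the transposition (1 2), v to the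
  N-cycle and every other generator to 1 defines an epimorphism \<rho> onto the symmetric group S_N, and
  the left-regular representation L embeds F into S_N fixing the point N. Let H consist of the
  automorphisms a for which \<rho> \<circ> a is \<rho> followed by conjugation with L f for some f in F. As no
  L f other than the identity commutes with the N-cycle, f is determined by a, and a \<mapsto> f is a
  homomorphism; it is onto because \<rho> is, so that inner automorphisms realise every f. Finally the
  coset of a modulo H only depends on the finitely many values \<rho>(a(x)) for x in the finite vertex
  set, whence H has finite index.\<close>

definition involves :: "('a, 'b) monoid_scheme \<Rightarrow> ('c, 'd) monoid_scheme \<Rightarrow> bool" where
  "involves G F \<longleftrightarrow> (\<exists>H. subgroup H G \<and> finite (rcosets\<^bsub>G\<^esub> H) \<and>
     (\<exists>h. h \<in> hom (G\<lparr>carrier := H\<rparr>) F \<and> h ` H = carrier F))"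

lemma involves_all_finite_groupsI:
  "(\<And>F :: nat monoid. group F \<Longrightarrow> finite (carrier F) \<Longrightarrow> involves G F)
   \<Longrightarrow> involves_all_finite_groups G"
  by (simp add: involves_all_finite_groups_def involves_def)

lemma finite_image_if_factors:
  assumes "finite (k ` A)" and "\<And>a b. a \<in> A \<Longrightarrow> b \<in> A \<Longrightarrow> k a = k b \<Longrightarrow> f a = f b"
  shows "finite (f ` A)"
proof -
  have "f ` A \<subseteq> (\<lambda>y. f (SOME a. a \<in> A \<and> k a = y)) ` k ` A"
  proof
    fix z assume "z \<in> f ` A"
    then obtain a where a: "a \<in> A" "z = f a" by blast
    define b where "b = (SOME b. b \<in> A \<and> k b = k a)"
    have "b \<in> A \<and> k b = k a" unfolding b_def by (rule someI[of _ a]) (use a in simp)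
    then have "z = (\<lambda>y. f (SOME a. a \<in> A \<and> k a = y)) (k a)"
      using a assms(2)[of b a] by (simp add: b_def)
    then show "z \<in> (\<lambda>y. f (SOME a. a \<in> A \<and> k a = y)) ` k ` A" using a(1) by blast
  qed
  with assms(1) show ?thesis by (rule finite_surj)
qed

lemma hom_eq_on_generate:
  assumes "group G" "group H" "h1 \<in> hom G H" "h2 \<in> hom G H" "A \<subseteq> carrier G"
    and "\<And>x. x \<in> A \<Longrightarrow> h1 x = h2 x" and "g \<in> generate G A"
  shows "h1 g = h2 g"
proof -
  interpret h1: group_hom G H h1 using assms by (simp add: group_hom_def group_hom_axioms_def)
  interpret h2: group_hom G H h2 using assms by (simp add: group_hom_def group_hom_axioms_def)
  from assms(7) show ?thesis
  proof (induction rule: generate.induct)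
    case one show ?case by simp
  next
    case (incl x) with assms(6) show ?case by simp
  next
    case (inv x) with assms(5,6) show ?case by auto
  next
    case (eng a b)
    then have "a \<in> carrier G" "b \<in> carrier G" using h1.G.generate_in_carrier[OF assms(5)] by blast+
    with eng show ?case by simp
  qed
qed

lemma (in group) conjugation_in_auto:
  assumes "g \<in> carrier G" shows "(\<lambda>x\<in>carrier G. g \<otimes> x \<otimes> inv g) \<in> auto G"
proof -
  have "(\<lambda>x\<in>carrier G. g \<otimes> x \<otimes> inv g) \<in> hom G G"
    using assms by (intro homI) (simp_all add: m_assoc inv_solve_left)
  moreover have "(\<lambda>x\<in>carrier G. g \<otimes> x \<otimes> inv g) \<in> Bij (carrier G)"
    unfolding Bij_def using conjugation_is_bij[OF assms] by simp
  ultimately show ?thesis unfolding auto_def by blast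
qed

lemma carrier_AutoGroup: "carrier (AutoGroup G) = auto G"
  by (simp add: AutoGroup_def)

lemma AutoGroup_mult_apply:
  "a \<in> auto G \<Longrightarrow> b \<in> auto G \<Longrightarrow> x \<in> carrier G \<Longrightarrow> (a \<otimes>\<^bsub>AutoGroup G\<^esub> b) x = a (b x)"
  by (simp add: AutoGroup_def BijGroup_def auto_def compose_def)

lemma AutoGroup_one_apply: "x \<in> carrier G \<Longrightarrow> \<one>\<^bsub>AutoGroup G\<^esub> x = x"
  by (simp add: AutoGroup_def BijGroup_def)

lemma auto_closed: "a \<in> auto G \<Longrightarrow> x \<in> carrier G \<Longrightarrow> a x \<in> carrier G"
  by (simp add: auto_def hom_def Pi_iff)

lemma (in group) AutoGroup_inv_apply:
  assumes a: "a \<in> auto G" and x: "x \<in> carrier G"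
  shows "a ((inv\<^bsub>AutoGroup G\<^esub> a) x) = x"
proof -
  interpret Aut: group "AutoGroup G" by (rule AutoGroup)
  have aA: "a \<in> carrier (AutoGroup G)" using a by (simp add: carrier_AutoGroup)
  then have "inv\<^bsub>AutoGroup G\<^esub> a \<in> auto G" using Aut.inv_closed carrier_AutoGroup by blast
  then have "a ((inv\<^bsub>AutoGroup G\<^esub> a) x) = (a \<otimes>\<^bsub>AutoGroup G\<^esub> inv\<^bsub>AutoGroup G\<^esub> a) x"
    using a x by (simp add: AutoGroup_mult_apply)
  also have "\<dots> = x" using aA x by (simp add: AutoGroup_one_apply)
  finally show ?thesis .
qed

lemma (in group) conj_eq_imp_commute:
  assumes "x \<in> carrier G" "y \<in> carrier G" "c \<in> carrier G"
    and "x \<otimes> c \<otimes> inv x = y \<otimes> c \<otimes> inv y"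
  shows "(inv y \<otimes> x) \<otimes> c = c \<otimes> (inv y \<otimes> x)"
proof -
  have "(inv y \<otimes> x) \<otimes> c = inv y \<otimes> (x \<otimes> c \<otimes> inv x) \<otimes> x"
    using assms(1-3) by (simp add: m_assoc inv_solve_left)
  also have "\<dots> = inv y \<otimes> (y \<otimes> c \<otimes> inv y) \<otimes> x" using assms(4) by simp
  also have "\<dots> = c \<otimes> (inv y \<otimes> x)" using assms(1-3) by (simp add: m_assoc[symmetric])
  finally show ?thesis .
qed

lemma (in group) inv_conj_conj:
  "x \<in> carrier G \<Longrightarrow> r \<in> carrier G \<Longrightarrow> inv x \<otimes> (x \<otimes> r \<otimes> inv x) \<otimes> x = r"
  by (simp add: m_assoc) (simp flip: m_assoc)

lemma (in group) commute_inv_left: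
  assumes "a \<in> carrier G" "b \<in> carrier G" "a \<otimes> b = b \<otimes> a"
  shows "inv a \<otimes> b = b \<otimes> inv a"
proof -
  have "inv a \<otimes> b = inv a \<otimes> (b \<otimes> a) \<otimes> inv a" using assms by (simp add: m_assoc)
  also have "\<dots> = b \<otimes> inv a" using assms by (simp add: m_assoc flip: assms(3)) (simp flip: m_assoc)
  finally show ?thesis .
qed

lemma (in group) centralizer_subgroup:
  assumes g: "g \<in> carrier G" shows "subgroup {h \<in> carrier G. h \<otimes> g = g \<otimes> h} G"
proof (rule subgroupI)
  have "\<one> \<in> {h \<in> carrier G. h \<otimes> g = g \<otimes> h}" using g by simp
  then show "{h \<in> carrier G. h \<otimes> g = g \<otimes> h} \<noteq> {}" by blast
next
  fix h assume "h \<in> {h \<in> carrier G. h \<otimes> g = g \<otimes> h}"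
  then show "inv h \<in> {h \<in> carrier G. h \<otimes> g = g \<otimes> h}" using commute_inv_left g by simp
next
  fix h k assume "h \<in> {h \<in> carrier G. h \<otimes> g = g \<otimes> h}" "k \<in> {h \<in> carrier G. h \<otimes> g = g \<otimes> h}"
  then have "h \<in> carrier G" "k \<in> carrier G" "h \<otimes> g = g \<otimes> h" "k \<otimes> g = g \<otimes> k" by auto
  then have "h \<otimes> k \<otimes> g = g \<otimes> (h \<otimes> k)" using g by (metis m_assoc)
  then show "h \<otimes> k \<in> {h \<in> carrier G. h \<otimes> g = g \<otimes> h}"
    using \<open>h \<in> carrier G\<close> \<open>k \<in> carrier G\<close> by simp
qed auto

lemma (in group) comm_group_if_generators_commute:
  assumes gen: "generate G S = carrier G" and comm: "\<And>s t. s \<in> S \<Longrightarrow> t \<in> S \<Longrightarrow> s \<otimes> t = t \<otimes> s"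
  shows "comm_group G"
proof -
  have S: "S \<subseteq> carrier G"
  proof
    fix s assume "s \<in> S"
    then have "s \<in> generate G S" by (rule generate.incl)
    with gen show "s \<in> carrier G" by simp
  qed
  have commutes_generated: "g \<otimes> t = t \<otimes> g"
    if t: "t \<in> carrier G" and S_t: "\<And>s. s \<in> S \<Longrightarrow> s \<otimes> t = t \<otimes> s" and g: "g \<in> carrier G" for t g
  proof -
    have "generate G S \<subseteq> {h \<in> carrier G. h \<otimes> t = t \<otimes> h}"
    proof (rule generate_subgroup_incl)
      show "S \<subseteq> {h \<in> carrier G. h \<otimes> t = t \<otimes> h}" using S S_t by auto
      show "subgroup {h \<in> carrier G. h \<otimes> t = t \<otimes> h} G" using t by (rule centralizer_subgroup)
    qed
    moreover have "g \<in> generate G S" using gen g by simp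
    ultimately show ?thesis by blast
  qed
  show ?thesis
  proof (rule group_comm_groupI)
    fix g h assume g: "g \<in> carrier G" and h: "h \<in> carrier G"
    have "s \<otimes> h = h \<otimes> s" if "s \<in> S" for s
      using commutes_generated[of s h] that S comm h by auto
    then show "g \<otimes> h = h \<otimes> g" using commutes_generated[OF h _ g] by simp
  qed
qed

section \<open>Automorphisms descending to a finite quotient\<close>

locale inner_descent =
  G: group G + S: group S + F: group F
  for G :: "('g, 'x) monoid_scheme" and S :: "('s, 'y) monoid_scheme" and F :: "('f, 'z) monoid_scheme" +
  fixes \<rho> :: "'g \<Rightarrow> 's" and L :: "'f \<Rightarrow> 's" and gens :: "'g set"
  assumes rho_hom: "\<rho> \<in> hom G S"
    and rho_surj: "\<rho> ` carrier G = carrier S"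
    and L_hom: "L \<in> hom F S"
    and L_central_trivial:
      "\<And>f. f \<in> carrier F \<Longrightarrow> (\<And>s. s \<in> carrier S \<Longrightarrow> L f \<otimes>\<^bsub>S\<^esub> s = s \<otimes>\<^bsub>S\<^esub> L f) \<Longrightarrow> f = \<one>\<^bsub>F\<^esub>"
    and finite_gens: "finite gens"
    and generate_gens: "generate G gens = carrier G"
    and finite_S: "finite (carrier S)"
begin

sublocale rho: group_hom G S \<rho> by unfold_locales (rule rho_hom)
sublocale L: group_hom F S L by unfold_locales (rule L_hom)

definition descends :: "('g \<Rightarrow> 'g) \<Rightarrow> 'f \<Rightarrow> bool" where
  "descends a f \<longleftrightarrow> f \<in> carrier F \<and>
     (\<forall>g\<in>carrier G. \<rho> (a g) = L f \<otimes>\<^bsub>S\<^esub> \<rho> g \<otimes>\<^bsub>S\<^esub> inv\<^bsub>S\<^esub> L f)"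

definition descent_group :: "('g \<Rightarrow> 'g) set" where
  "descent_group = {a \<in> auto G. \<exists>f. descends a f}"

definition descent_map :: "('g \<Rightarrow> 'g) \<Rightarrow> 'f" where
  "descent_map a = (THE f. descends a f)"

lemma L_conj_inj:
  assumes f1: "f1 \<in> carrier F" and f2: "f2 \<in> carrier F"
    and eq: "\<And>s. s \<in> carrier S \<Longrightarrow>
       L f1 \<otimes>\<^bsub>S\<^esub> s \<otimes>\<^bsub>S\<^esub> inv\<^bsub>S\<^esub> L f1 = L f2 \<otimes>\<^bsub>S\<^esub> s \<otimes>\<^bsub>S\<^esub> inv\<^bsub>S\<^esub> L f2"
  shows "f1 = f2"
proof -
  have "inv\<^bsub>F\<^esub> f2 \<otimes>\<^bsub>F\<^esub> f1 = \<one>\<^bsub>F\<^esub>"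
  proof (rule L_central_trivial)
    fix s assume "s \<in> carrier S"
    then show "L (inv\<^bsub>F\<^esub> f2 \<otimes>\<^bsub>F\<^esub> f1) \<otimes>\<^bsub>S\<^esub> s = s \<otimes>\<^bsub>S\<^esub> L (inv\<^bsub>F\<^esub> f2 \<otimes>\<^bsub>F\<^esub> f1)"
      using f1 f2 eq S.conj_eq_imp_commute by simp
  qed (use f1 f2 in simp)
  then show ?thesis using f1 f2 by (metis F.inv_closed F.inv_inv F.inv_equality)
qed

lemma descends_unique:
  assumes "descends a f1" "descends a f2" shows "f1 = f2"
proof (rule L_conj_inj)
  fix s assume "s \<in> carrier S"
  then obtain g where "g \<in> carrier G" "s = \<rho> g" using rho_surj by blast
  with assms show "L f1 \<otimes>\<^bsub>S\<^esub> s \<otimes>\<^bsub>S\<^esub> inv\<^bsub>S\<^esub> L f1 = L f2 \<otimes>\<^bsub>S\<^esub> s \<otimes>\<^bsub>S\<^esub> inv\<^bsub>S\<^esub> L f2"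
    unfolding descends_def by metis
qed (use assms in \<open>simp_all add: descends_def\<close>)

lemma descent_map_eq: "descends a f \<Longrightarrow> descent_map a = f"
  unfolding descent_map_def using descends_unique by blast

lemma descends_descent_map: "a \<in> descent_group \<Longrightarrow> descends a (descent_map a)"
  unfolding descent_group_def using descent_map_eq by blast

lemma descends_one: "descends \<one>\<^bsub>AutoGroup G\<^esub> \<one>\<^bsub>F\<^esub>"
  unfolding descends_def by (simp add: AutoGroup_one_apply)

lemma descends_mult:
  assumes a: "a \<in> auto G" and b: "b \<in> auto G" and fa: "descends a fa" and fb: "descends b fb"
  shows "descends (a \<otimes>\<^bsub>AutoGroup G\<^esub> b) (fa \<otimes>\<^bsub>F\<^esub> fb)"
  unfolding descends_def
proof (intro conjI ballI)
  have fa': "fa \<in> carrier F" and fb': "fb \<in> carrier F" using fa fb by (simp_all add: descends_def)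
  then show "fa \<otimes>\<^bsub>F\<^esub> fb \<in> carrier F" by simp
  fix g assume g: "g \<in> carrier G"
  have "\<rho> ((a \<otimes>\<^bsub>AutoGroup G\<^esub> b) g) = L fa \<otimes>\<^bsub>S\<^esub> \<rho> (b g) \<otimes>\<^bsub>S\<^esub> inv\<^bsub>S\<^esub> L fa"
    using fa a b g by (simp add: AutoGroup_mult_apply auto_closed descends_def)
  also have "\<dots> = L fa \<otimes>\<^bsub>S\<^esub> (L fb \<otimes>\<^bsub>S\<^esub> \<rho> g \<otimes>\<^bsub>S\<^esub> inv\<^bsub>S\<^esub> L fb) \<otimes>\<^bsub>S\<^esub> inv\<^bsub>S\<^esub> L fa"
    using fb g by (simp add: descends_def)
  also have "\<dots> = L (fa \<otimes>\<^bsub>F\<^esub> fb) \<otimes>\<^bsub>S\<^esub> \<rho> g \<otimes>\<^bsub>S\<^esub> inv\<^bsub>S\<^esub> L (fa \<otimes>\<^bsub>F\<^esub> fb)"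
    using fa' fb' g by (simp add: S.m_assoc S.inv_mult_group)
  finally show "\<rho> ((a \<otimes>\<^bsub>AutoGroup G\<^esub> b) g) = \<dots>" .
qed

lemma descends_inv:
  assumes a: "a \<in> auto G" and f: "descends a f"
  shows "descends (inv\<^bsub>AutoGroup G\<^esub> a) (inv\<^bsub>F\<^esub> f)"
  unfolding descends_def
proof (intro conjI ballI)
  interpret Aut: group "AutoGroup G" by (rule G.AutoGroup)
  have f': "f \<in> carrier F" using f by (simp add: descends_def)
  then show "inv\<^bsub>F\<^esub> f \<in> carrier F" by simp
  fix g assume g: "g \<in> carrier G"
  have ia: "inv\<^bsub>AutoGroup G\<^esub> a \<in> auto G" using a Aut.inv_closed by (simp add: carrier_AutoGroup)
  define r where "r = \<rho> ((inv\<^bsub>AutoGroup G\<^esub> a) g)"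
  have ig: "(inv\<^bsub>AutoGroup G\<^esub> a) g \<in> carrier G" using ia g by (rule auto_closed)
  then have r: "r \<in> carrier S" unfolding r_def by simp
  have "\<rho> (a ((inv\<^bsub>AutoGroup G\<^esub> a) g)) = L f \<otimes>\<^bsub>S\<^esub> r \<otimes>\<^bsub>S\<^esub> inv\<^bsub>S\<^esub> L f"
    using f ig unfolding descends_def r_def by blast
  then have "\<rho> g = L f \<otimes>\<^bsub>S\<^esub> r \<otimes>\<^bsub>S\<^esub> inv\<^bsub>S\<^esub> L f"
    by (simp add: G.AutoGroup_inv_apply[OF a g])
  then have "r = inv\<^bsub>S\<^esub> L f \<otimes>\<^bsub>S\<^esub> \<rho> g \<otimes>\<^bsub>S\<^esub> L f"
    using f' r by (simp add: S.inv_conj_conj)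
  then show "\<rho> ((inv\<^bsub>AutoGroup G\<^esub> a) g) = L (inv\<^bsub>F\<^esub> f) \<otimes>\<^bsub>S\<^esub> \<rho> g \<otimes>\<^bsub>S\<^esub> inv\<^bsub>S\<^esub> L (inv\<^bsub>F\<^esub> f)"
    using f' by (simp add: r_def)
qed

lemma subgroup_descent_group: "subgroup descent_group (AutoGroup G)"
proof -
  interpret Aut: group "AutoGroup G" by (rule G.AutoGroup)
  show ?thesis
  proof (rule Aut.subgroupI)
    show "descent_group \<subseteq> carrier (AutoGroup G)"
      by (auto simp: descent_group_def carrier_AutoGroup)
    have "\<one>\<^bsub>AutoGroup G\<^esub> \<in> auto G" using Aut.one_closed by (simp add: carrier_AutoGroup)
    with descends_one show "descent_group \<noteq> {}" unfolding descent_group_def by blast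
  next
    fix a assume "a \<in> descent_group"
    then obtain f where a: "a \<in> auto G" "descends a f" by (auto simp: descent_group_def)
    then have "inv\<^bsub>AutoGroup G\<^esub> a \<in> auto G" using Aut.inv_closed by (simp add: carrier_AutoGroup)
    with descends_inv[OF a] show "inv\<^bsub>AutoGroup G\<^esub> a \<in> descent_group"
      unfolding descent_group_def by blast
  next
    fix a b assume "a \<in> descent_group" "b \<in> descent_group"
    then obtain fa fb where ab: "a \<in> auto G" "descends a fa" "b \<in> auto G" "descends b fb"
      by (auto simp: descent_group_def)
    then have "a \<otimes>\<^bsub>AutoGroup G\<^esub> b \<in> auto G" using Aut.m_closed by (simp add: carrier_AutoGroup)
    with descends_mult[OF ab(1,3,2,4)] show "a \<otimes>\<^bsub>AutoGroup G\<^esub> b \<in> descent_group"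
      unfolding descent_group_def by blast
  qed
qed

lemma descent_map_hom: "descent_map \<in> hom ((AutoGroup G)\<lparr>carrier := descent_group\<rparr>) F"
proof (rule homI)
  fix a assume "a \<in> carrier ((AutoGroup G)\<lparr>carrier := descent_group\<rparr>)"
  then have "descends a (descent_map a)" by (simp add: descends_descent_map)
  then show "descent_map a \<in> carrier F" unfolding descends_def by blast
next
  fix a b assume "a \<in> carrier ((AutoGroup G)\<lparr>carrier := descent_group\<rparr>)"
    "b \<in> carrier ((AutoGroup G)\<lparr>carrier := descent_group\<rparr>)"
  then have a: "a \<in> descent_group" and b: "b \<in> descent_group" by simp_all
  have "descends (a \<otimes>\<^bsub>AutoGroup G\<^esub> b) (descent_map a \<otimes>\<^bsub>F\<^esub> descent_map b)"
    using a b descends_descent_map descends_mult unfolding descent_group_def by blast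
  from descent_map_eq[OF this] show "descent_map (a \<otimes>\<^bsub>(AutoGroup G)\<lparr>carrier := descent_group\<rparr>\<^esub> b)
      = descent_map a \<otimes>\<^bsub>F\<^esub> descent_map b"
    by simp
qed

text \<open>Every element of \<open>F\<close> is realised by an inner automorphism, since \<open>\<rho>\<close> is onto.\<close>
lemma descent_map_surj: "descent_map ` descent_group = carrier F"
proof
  show "descent_map ` descent_group \<subseteq> carrier F"
    using hom_carrier[OF descent_map_hom] by simp
  show "carrier F \<subseteq> descent_map ` descent_group"
  proof
    fix f assume f: "f \<in> carrier F"
    then have "L f \<in> carrier S" by simp
    then obtain g0 where g0: "g0 \<in> carrier G" "\<rho> g0 = L f" by (metis rho_surj imageE)
    define c where "c = (\<lambda>g\<in>carrier G. g0 \<otimes>\<^bsub>G\<^esub> g \<otimes>\<^bsub>G\<^esub> inv\<^bsub>G\<^esub> g0)"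
    have "descends c f"
      unfolding descends_def
    proof (intro conjI ballI)
      fix g assume "g \<in> carrier G"
      with g0 show "\<rho> (c g) = L f \<otimes>\<^bsub>S\<^esub> \<rho> g \<otimes>\<^bsub>S\<^esub> inv\<^bsub>S\<^esub> L f"
        by (simp add: c_def)
    qed (rule f)
    moreover have "c \<in> auto G" unfolding c_def by (rule G.conjugation_in_auto[OF g0(1)])
    ultimately have "c \<in> descent_group" "descent_map c = f"
      unfolding descent_group_def using descent_map_eq by blast+
    then show "f \<in> descent_map ` descent_group" by blast
  qed
qed

lemma gens_subset: "gens \<subseteq> carrier G"
proof -
  have "gens \<subseteq> generate G gens" by (blast intro: generate.incl)
  then show ?thesis by (simp only: generate_gens)
qed

lemma agree_on_gens_imp_agree:
  assumes a: "a \<in> auto G" and b: "b \<in> auto G" and eq: "\<And>x. x \<in> gens \<Longrightarrow> \<rho> (a x) = \<rho> (b x)"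
    and g: "g \<in> carrier G"
  shows "\<rho> (a g) = \<rho> (b g)"
proof -
  have "\<rho> \<circ> a \<in> hom G S" "\<rho> \<circ> b \<in> hom G S"
    using a b rho_hom unfolding auto_def by (blast intro: hom_compose)+
  from hom_eq_on_generate[OF G.group_axioms S.group_axioms this gens_subset]
  have "(\<rho> \<circ> a) g = (\<rho> \<circ> b) g" using eq g generate_gens by simp
  then show ?thesis by simp
qed

lemma descends_quotient_if_agree_on_gens:
  assumes a: "a \<in> auto G" and b: "b \<in> auto G" and eq: "\<And>x. x \<in> gens \<Longrightarrow> \<rho> (a x) = \<rho> (b x)"
  shows "descends (b \<otimes>\<^bsub>AutoGroup G\<^esub> inv\<^bsub>AutoGroup G\<^esub> a) \<one>\<^bsub>F\<^esub>"
  unfolding descends_def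
proof (intro conjI ballI)
  interpret Aut: group "AutoGroup G" by (rule G.AutoGroup)
  have ia: "inv\<^bsub>AutoGroup G\<^esub> a \<in> auto G" using a Aut.inv_closed by (simp add: carrier_AutoGroup)
  fix g assume g: "g \<in> carrier G"
  have ig: "(inv\<^bsub>AutoGroup G\<^esub> a) g \<in> carrier G" using ia g by (rule auto_closed)
  have "\<rho> ((b \<otimes>\<^bsub>AutoGroup G\<^esub> inv\<^bsub>AutoGroup G\<^esub> a) g) = \<rho> (b ((inv\<^bsub>AutoGroup G\<^esub> a) g))"
    using b ia g by (simp add: AutoGroup_mult_apply)
  also have "\<dots> = \<rho> (a ((inv\<^bsub>AutoGroup G\<^esub> a) g))"
    using agree_on_gens_imp_agree[OF a b eq ig] by simp
  also have "\<dots> = \<rho> g" by (simp add: G.AutoGroup_inv_apply[OF a g])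
  finally show "\<rho> ((b \<otimes>\<^bsub>AutoGroup G\<^esub> inv\<^bsub>AutoGroup G\<^esub> a) g)
      = L \<one>\<^bsub>F\<^esub> \<otimes>\<^bsub>S\<^esub> \<rho> g \<otimes>\<^bsub>S\<^esub> inv\<^bsub>S\<^esub> L \<one>\<^bsub>F\<^esub>"
    using g by simp
qed simp

lemma finite_rcosets_descent_group: "finite (rcosets\<^bsub>AutoGroup G\<^esub> descent_group)"
proof -
  interpret Aut: group "AutoGroup G" by (rule G.AutoGroup)
  let ?key = "\<lambda>a. restrict (\<rho> \<circ> a) gens"
  have "?key a \<in> gens \<rightarrow>\<^sub>E carrier S" if a: "a \<in> auto G" for a
    unfolding restrict_PiE_iff
  proof
    fix x assume "x \<in> gens"
    then show "(\<rho> \<circ> a) x \<in> carrier S" using auto_closed[OF a] gens_subset by auto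
  qed
  then have "?key ` auto G \<subseteq> gens \<rightarrow>\<^sub>E carrier S" by blast
  then have finite_keys: "finite (?key ` auto G)"
    using finite_gens finite_S by (meson finite_PiE finite_subset)
  have same_coset: "descent_group #>\<^bsub>AutoGroup G\<^esub> a = descent_group #>\<^bsub>AutoGroup G\<^esub> b"
    if a: "a \<in> auto G" and b: "b \<in> auto G" and key: "?key a = ?key b" for a b
  proof -
    have "\<rho> (a x) = \<rho> (b x)" if "x \<in> gens" for x
      using fun_cong[OF key, of x] that by simp
    from descends_quotient_if_agree_on_gens[OF a b this]
    have "b \<otimes>\<^bsub>AutoGroup G\<^esub> inv\<^bsub>AutoGroup G\<^esub> a \<in> descent_group"
      using a b Aut.m_closed Aut.inv_closed unfolding descent_group_def carrier_AutoGroup by blast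
    then have "descent_group #>\<^bsub>AutoGroup G\<^esub> (b \<otimes>\<^bsub>AutoGroup G\<^esub> inv\<^bsub>AutoGroup G\<^esub> a) = descent_group"
      by (rule subgroup.rcos_const[OF subgroup_descent_group Aut.is_group])
    then have "descent_group #>\<^bsub>AutoGroup G\<^esub> b = descent_group #>\<^bsub>AutoGroup G\<^esub> a"
      using a b subgroup.subset[OF subgroup_descent_group]
      by (intro Aut.coset_mult_inv1) (simp_all add: carrier_AutoGroup)
    then show ?thesis by (rule sym)
  qed
  have "finite ((\<lambda>a. descent_group #>\<^bsub>AutoGroup G\<^esub> a) ` auto G)"
    by (rule finite_image_if_factors[OF finite_keys same_coset])
  then show ?thesis unfolding RCOSETS_def carrier_AutoGroup UNION_singleton_eq_range .
qed

theorem involves_AutoGroup: "involves (AutoGroup G) F"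
  unfolding involves_def
  using subgroup_descent_group finite_rcosets_descent_group descent_map_hom descent_map_surj
  by (intro exI[of _ descent_group] conjI exI[of _ descent_map])

end

section \<open>Symmetric groups\<close>

definition cycle_perm :: "nat \<Rightarrow> nat \<Rightarrow> nat" where
  "cycle_perm N i = (if 1 \<le> i \<and> i < N then i + 1 else if i = N then 1 else i)"

lemma cycle_perm_permutes: assumes "1 \<le> N" shows "cycle_perm N permutes {1..N}"
proof (rule bij_imp_permutes)
  show "bij_betw (cycle_perm N) {1..N} {1..N}"
  proof (rule bij_betw_imageI)
    show "inj_on (cycle_perm N) {1..N}" unfolding inj_on_def cycle_perm_def by auto
    show "cycle_perm N ` {1..N} = {1..N}"
    proof
      show "cycle_perm N ` {1..N} \<subseteq> {1..N}" using assms by (auto simp: cycle_perm_def)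
      show "{1..N} \<subseteq> cycle_perm N ` {1..N}"
      proof
        fix y assume y: "y \<in> {1..N}"
        show "y \<in> cycle_perm N ` {1..N}"
        proof (cases "y = 1")
          case True
          then show ?thesis using assms by (intro image_eqI[of _ _ N]) (auto simp: cycle_perm_def)
        next
          case False
          then show ?thesis using y by (intro image_eqI[of _ _ "y - 1"]) (auto simp: cycle_perm_def)
        qed
      qed
    qed
  qed
qed (use assms in \<open>auto simp: cycle_perm_def\<close>)

lemma transpose_conj:
  assumes "bij p" shows "p \<circ> Transposition.transpose a b \<circ> inv' p = Transposition.transpose (p a) (p b)"
proof -
  have "Transposition.transpose (p a) (p b) \<circ> p = p \<circ> Transposition.transpose a b"
    using transpose_comp_eq[OF assms] assms by (simp add: bij_is_inj)
  then show ?thesis using assms by (metis bij_is_surj comp_assoc comp_id surj_iff)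
qed

lemma sym_group_conj_closed:
  assumes K: "subgroup K (sym_group N)" and p: "p \<in> K" and t: "t \<in> K"
  shows "p \<circ> t \<circ> inv' p \<in> K"
proof -
  have "p \<otimes>\<^bsub>sym_group N\<^esub> t \<otimes>\<^bsub>sym_group N\<^esub> inv\<^bsub>sym_group N\<^esub> p \<in> K"
    using K p t by (simp add: subgroup.m_closed subgroup.m_inv_closed)
  then show ?thesis using subgroup.subset[OF K] p by (simp add: sym_group_mult subset_iff)
qed

context
  fixes N :: nat and K :: "(nat \<Rightarrow> nat) set"
  assumes N: "2 \<le> N" and K: "subgroup K (sym_group N)"
    and swap_K: "Transposition.transpose 1 2 \<in> K" and cycle_K: "cycle_perm N \<in> K"
begin

lemma adjacent_transpose_in_subgroup:
  "1 \<le> i \<Longrightarrow> i < N \<Longrightarrow> Transposition.transpose i (i + 1) \<in> K"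
proof (induction i)
  case (Suc i)
  show ?case
  proof (cases "i = 0")
    case True then show ?thesis using swap_K by (simp add: numeral_2_eq_2)
  next
    case False
    have "bij (cycle_perm N)" using cycle_perm_permutes[of N] N permutes_bij by auto
    moreover have "cycle_perm N \<circ> Transposition.transpose i (i + 1) \<circ> inv' (cycle_perm N) \<in> K"
      using False Suc.prems by (intro sym_group_conj_closed[OF K cycle_K Suc.IH]) auto
    ultimately have "Transposition.transpose (cycle_perm N i) (cycle_perm N (i + 1)) \<in> K"
      by (simp add: transpose_conj)
    moreover have "cycle_perm N i = Suc i" "cycle_perm N (i + 1) = Suc i + 1"
      using False Suc.prems by (auto simp: cycle_perm_def)
    ultimately show ?thesis by simp
  qed
qed simp

lemma transpose_in_subgroup_less:
  "1 \<le> i \<Longrightarrow> i < j \<Longrightarrow> j \<le> N \<Longrightarrow> Transposition.transpose i j \<in> K"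
proof (induction j)
  case (Suc j)
  show ?case
  proof (cases "j = i")
    case True then show ?thesis using adjacent_transpose_in_subgroup Suc.prems by simp
  next
    case False
    then have ij: "i < j" using Suc.prems by simp
    let ?t = "Transposition.transpose (j + 1) j"
    have "?t \<circ> Transposition.transpose j i \<circ> ?t \<in> K"
      using Suc ij adjacent_transpose_in_subgroup[of j] subgroup.m_closed[OF K]
      by (simp add: sym_group_mult transpose_commute)
    moreover have "?t \<circ> Transposition.transpose j i \<circ> ?t = Transposition.transpose (j + 1) i"
      using ij by (intro transpose_comp_triple) auto
    ultimately show ?thesis by (simp add: transpose_commute)
  qed
qed simp

lemma transpose_in_subgroup:
  assumes "i \<in> {1..N}" "j \<in> {1..N}" shows "Transposition.transpose i j \<in> K"
proof (cases i j rule: linorder_cases)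
  case equal then show ?thesis using subgroup.one_closed[OF K] by (simp add: sym_group_one)
next
  case less then show ?thesis using transpose_in_subgroup_less assms by auto
next
  case greater then show ?thesis using transpose_in_subgroup_less[of j i] assms
    by (auto simp: transpose_commute)
qed

lemma subgroup_eq_sym_group: "K = carrier (sym_group N)"
proof
  show "K \<subseteq> carrier (sym_group N)" by (rule subgroup.subset[OF K])
  show "carrier (sym_group N) \<subseteq> K"
  proof
    fix p assume "p \<in> carrier (sym_group N)"
    then have "p permutes {1..N}" by (simp add: sym_group_carrier)
    then show "p \<in> K" using finite_atLeastAtMost
    proof (induction rule: permutes_induct)
      case id then show ?case using subgroup.one_closed[OF K] by (simp add: sym_group_one id_def)
    next
      case (swap a b p)
      then have "Transposition.transpose a b \<otimes>\<^bsub>sym_group N\<^esub> p \<in> K"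
        using subgroup.m_closed[OF K transpose_in_subgroup] by simp
      then show ?case by (simp add: sym_group_mult comp_def)
    qed
  qed
qed

end

lemma commutes_with_cycle_perm_imp_id:
  assumes z: "z permutes {1..N}" and fix_N: "z N = N" and N: "1 \<le> N"
    and comm: "z \<circ> cycle_perm N = cycle_perm N \<circ> z"
  shows "z = id"
proof -
  have step: "z (cycle_perm N i) = cycle_perm N (z i)" for i
    using comm by (metis comp_apply)
  have "z i = i" if "1 \<le> i" "i \<le> N" for i
    using that
  proof (induction i rule: nat_induct_at_least)
    case base
    have "z 1 = z (cycle_perm N N)" using N by (simp add: cycle_perm_def)
    also have "\<dots> = cycle_perm N N" using step fix_N by simp
    also have "\<dots> = 1" by (simp add: cycle_perm_def)
    finally show ?case .
  next
    case (Suc i)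
    have "z (Suc i) = z (cycle_perm N i)" using Suc by (simp add: cycle_perm_def)
    also have "\<dots> = cycle_perm N i" using step Suc by simp
    also have "\<dots> = Suc i" using Suc by (simp add: cycle_perm_def)
    finally show ?case .
  qed
  moreover have "z i = i" if "i \<notin> {1..N}" for i using z that by (simp add: permutes_def)
  ultimately show ?thesis by (auto simp: fun_eq_iff)
qed

text \<open>The left-regular representation, transported to the index set \<open>I\<close> along \<open>h\<close>.\<close>
definition regular_perm :: "('a, 'b) monoid_scheme \<Rightarrow> (nat \<Rightarrow> 'a) \<Rightarrow> nat set \<Rightarrow> 'a \<Rightarrow> nat \<Rightarrow> nat" where
  "regular_perm F h I f = (\<lambda>i. if i \<in> I then inv_into I h (f \<otimes>\<^bsub>F\<^esub> h i) else i)"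

context
  fixes F :: "('a, 'b) monoid_scheme" and h :: "nat \<Rightarrow> 'a" and I :: "nat set"
  assumes F: "group F" and h: "bij_betw h I (carrier F)"
begin

interpretation group F by (rule F)

lemma regular_perm_mult:
  assumes "f \<in> carrier F" "g \<in> carrier F"
  shows "regular_perm F h I (f \<otimes>\<^bsub>F\<^esub> g) = regular_perm F h I f \<circ> regular_perm F h I g"
proof
  fix i show "regular_perm F h I (f \<otimes>\<^bsub>F\<^esub> g) i = (regular_perm F h I f \<circ> regular_perm F h I g) i"
    using assms h bij_betw_apply[OF h] bij_betw_inv_into_left[OF h]
      bij_betw_inv_into_right[OF h] bij_betw_apply[OF bij_betw_inv_into[OF h]]
    by (simp add: regular_perm_def m_assoc)
qed

lemma regular_perm_one: "regular_perm F h I \<one>\<^bsub>F\<^esub> = id"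
  using bij_betw_apply[OF h] bij_betw_inv_into_left[OF h] by (auto simp: regular_perm_def)

lemma regular_perm_permutes:
  assumes f: "f \<in> carrier F" shows "regular_perm F h I f permutes I"
proof (rule bij_imp_permutes)
  have inv_f: "regular_perm F h I (inv\<^bsub>F\<^esub> f) \<circ> regular_perm F h I f = id"
    "regular_perm F h I f \<circ> regular_perm F h I (inv\<^bsub>F\<^esub> f) = id"
    using f by (simp_all flip: regular_perm_mult add: regular_perm_one)
  have maps: "regular_perm F h I g ` I \<subseteq> I" if "g \<in> carrier F" for g
    using that bij_betw_apply[OF h] bij_betw_apply[OF bij_betw_inv_into[OF h]]
    by (auto simp: regular_perm_def)
  show "bij_betw (regular_perm F h I f) I I"
    using f maps inv_f by (intro bij_betw_byWitness[where f' = "regular_perm F h I (inv\<^bsub>F\<^esub> f)"])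
      (auto simp: fun_eq_iff comp_def)
qed (simp add: regular_perm_def)

lemma regular_perm_inj:
  assumes "f \<in> carrier F" "g \<in> carrier F" "regular_perm F h I f = regular_perm F h I g"
  shows "f = g"
proof -
  let ?i = "inv_into I h \<one>\<^bsub>F\<^esub>"
  have "?i \<in> I" "h ?i = \<one>\<^bsub>F\<^esub>"
    using bij_betw_apply[OF bij_betw_inv_into[OF h]] bij_betw_inv_into_right[OF h] by auto
  then have "h (regular_perm F h I x ?i) = x" if "x \<in> carrier F" for x
    using that bij_betw_inv_into_right[OF h] by (simp add: regular_perm_def)
  with assms show ?thesis by metis
qed

end

lemma sym_group_regular_embedding:
  assumes F: "group F" "finite (carrier F)" and N: "card (carrier F) < N"
  obtains L where "L \<in> hom F (sym_group N)"
    and "\<And>f. f \<in> carrier F \<Longrightarrow>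
      (\<And>s. s \<in> carrier (sym_group N) \<Longrightarrow> L f \<otimes>\<^bsub>sym_group N\<^esub> s = s \<otimes>\<^bsub>sym_group N\<^esub> L f)
      \<Longrightarrow> f = \<one>\<^bsub>F\<^esub>"
proof -
  let ?I = "{1..card (carrier F)}"
  obtain h where h: "bij_betw h ?I (carrier F)" using ex_bij_betw_nat_finite_1 F(2) by blast
  let ?L = "regular_perm F h ?I"
  have L_carrier: "?L f \<in> carrier (sym_group N)" if "f \<in> carrier F" for f
    using regular_perm_permutes[OF F(1) h that] N
    by (auto simp: sym_group_carrier elim: permutes_subset)
  have "?L \<in> hom F (sym_group N)"
  proof (rule homI)
    fix f g assume "f \<in> carrier F" "g \<in> carrier F"
    then show "?L (f \<otimes>\<^bsub>F\<^esub> g) = ?L f \<otimes>\<^bsub>sym_group N\<^esub> ?L g"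
      unfolding sym_group_mult by (rule regular_perm_mult[OF F(1) h])
  qed (rule L_carrier)
  moreover have "f = \<one>\<^bsub>F\<^esub>" if f: "f \<in> carrier F"
    and central: "\<And>s. s \<in> carrier (sym_group N) \<Longrightarrow> ?L f \<otimes>\<^bsub>sym_group N\<^esub> s = s \<otimes>\<^bsub>sym_group N\<^esub> ?L f"
    for f
  proof -
    have "1 \<le> N" using N by simp
    have "?L f \<circ> cycle_perm N = cycle_perm N \<circ> ?L f"
      using central[of "cycle_perm N"] cycle_perm_permutes[OF \<open>1 \<le> N\<close>]
      by (simp add: sym_group_carrier sym_group_mult)
    moreover have "?L f N = N" using N by (simp add: regular_perm_def)
    ultimately have "?L f = id"
      using L_carrier[OF f] \<open>1 \<le> N\<close>
      by (intro commutes_with_cycle_perm_imp_id) (simp_all add: sym_group_carrier)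
    then show "f = \<one>\<^bsub>F\<^esub>"
      using regular_perm_inj[OF F(1) h f] regular_perm_one[OF F(1) h]
        monoid.one_closed[OF group.is_monoid[OF F(1)]]
      by simp
  qed
  ultimately show thesis by (rule that)
qed

section \<open>Right-angled Artin groups\<close>

abbreviation raag_class :: "'v set \<Rightarrow> ('v \<Rightarrow> 'v \<Rightarrow> bool) \<Rightarrow> ('v \<times> bool) list \<Rightarrow> ('v \<times> bool) list set" where
  "raag_class V E w \<equiv> raag_rel V E `` {w}"

lemma raag_rel_refl: "(w, w) \<in> raag_rel V E"
  by (simp add: raag_rel_def)

lemma raag_rel_sym: "(a, b) \<in> raag_rel V E \<Longrightarrow> (b, a) \<in> raag_rel V E"
  unfolding raag_rel_def by (meson sym_Un_converse sym_rtrancl symD)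

lemma raag_rel_trans: "(a, b) \<in> raag_rel V E \<Longrightarrow> (b, c) \<in> raag_rel V E \<Longrightarrow> (a, c) \<in> raag_rel V E"
  unfolding raag_rel_def by (rule rtrancl_trans)

lemma raag_step_append: "(a, b) \<in> raag_step V E \<Longrightarrow> (p @ a @ q, p @ b @ q) \<in> raag_step V E"
proof (induction rule: raag_step.induct)
  case (cancel x u b w)
  from raag_step.cancel[OF cancel, of "p @ u" b "w @ q"] show ?case by simp
next
  case (commute x y u b c w)
  from raag_step.commute[where E = E and x = x and y = y and u = "p @ u" and w = "w @ q", OF commute]
  show ?case by simp
qed

lemma raag_rel_append: "(a, b) \<in> raag_rel V E \<Longrightarrow> (p @ a @ q, p @ b @ q) \<in> raag_rel V E"
  unfolding raag_rel_def
proof (induction rule: rtrancl_induct)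
  case (step y z)
  then have "(p @ y @ q, p @ z @ q) \<in> raag_step V E \<union> (raag_step V E)\<inverse>"
    using raag_step_append by blast
  with step(3) show ?case by (rule rtrancl_into_rtrancl)
qed simp

lemma raag_rel_append2:
  "(a, a') \<in> raag_rel V E \<Longrightarrow> (b, b') \<in> raag_rel V E \<Longrightarrow> (a @ b, a' @ b') \<in> raag_rel V E"
  using raag_rel_append[of a a' V E "[]" b] raag_rel_append[of b b' V E a' "[]"] raag_rel_trans
  by fastforce

lemma raag_class_eq_iff: "raag_class V E a = raag_class V E b \<longleftrightarrow> (a, b) \<in> raag_rel V E"
  by (auto intro: raag_rel_trans raag_rel_sym raag_rel_refl)

lemma RAAG_carrier: "A \<in> carrier (RAAG V E) \<longleftrightarrow> (\<exists>w\<in>raag_words V. A = raag_class V E w)"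
  by (auto simp: RAAG_def quotient_def)

lemma raag_class_in_carrier: "set w \<subseteq> V \<times> UNIV \<Longrightarrow> raag_class V E w \<in> carrier (RAAG V E)"
  by (auto simp: RAAG_carrier raag_words_def)

lemma RAAG_one: "\<one>\<^bsub>RAAG V E\<^esub> = raag_class V E []"
  by (simp add: RAAG_def)

lemma RAAG_mult: "raag_class V E a \<otimes>\<^bsub>RAAG V E\<^esub> raag_class V E b = raag_class V E (a @ b)"
proof -
  have "(\<Union>a'\<in>raag_class V E a. \<Union>b'\<in>raag_class V E b. raag_class V E (a' @ b')) = raag_class V E (a @ b)"
    using raag_rel_refl[of a] raag_rel_refl[of b] raag_rel_append2 raag_rel_trans by fastforce
  then show ?thesis by (simp add: RAAG_def)
qed

definition raag_inv_word :: "('v \<times> bool) list \<Rightarrow> ('v \<times> bool) list" where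
  "raag_inv_word w = rev (map (\<lambda>(x, b). (x, \<not> b)) w)"

lemma raag_inv_word_cancel: "w \<in> raag_words V \<Longrightarrow> (raag_inv_word w @ w, []) \<in> raag_rel V E"
proof (induction w)
  case (Cons p w)
  obtain x b where p: "p = (x, b)" by force
  from Cons.prems p have x: "x \<in> V" and w: "w \<in> raag_words V" by (auto simp: raag_words_def)
  have "(raag_inv_word w @ [(x, \<not> b), (x, \<not> \<not> b)] @ w, raag_inv_word w @ w) \<in> raag_step V E"
    by (rule raag_step.cancel[OF x])
  then have "(raag_inv_word (p # w) @ (p # w), raag_inv_word w @ w) \<in> raag_rel V E"
    unfolding raag_rel_def by (auto simp: p raag_inv_word_def)
  from raag_rel_trans[OF this Cons.IH[OF w]] show ?case .
qed (simp add: raag_inv_word_def raag_rel_refl)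

lemma RAAG_group: "group (RAAG V E)"
proof (rule groupI)
  fix x y assume "x \<in> carrier (RAAG V E)" "y \<in> carrier (RAAG V E)"
  then obtain a b where "set a \<subseteq> V \<times> UNIV" "set b \<subseteq> V \<times> UNIV"
    "x = raag_class V E a" "y = raag_class V E b"
    by (auto simp: RAAG_carrier raag_words_def)
  then show "x \<otimes>\<^bsub>RAAG V E\<^esub> y \<in> carrier (RAAG V E)"
    by (simp add: RAAG_mult raag_class_in_carrier)
next
  show "\<one>\<^bsub>RAAG V E\<^esub> \<in> carrier (RAAG V E)" by (simp add: RAAG_one raag_class_in_carrier)
next
  fix x assume "x \<in> carrier (RAAG V E)"
  then obtain w where w: "w \<in> raag_words V" "x = raag_class V E w" by (auto simp: RAAG_carrier)
  show "\<exists>y\<in>carrier (RAAG V E). y \<otimes>\<^bsub>RAAG V E\<^esub> x = \<one>\<^bsub>RAAG V E\<^esub>"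
  proof
    show "raag_class V E (raag_inv_word w) \<otimes>\<^bsub>RAAG V E\<^esub> x = \<one>\<^bsub>RAAG V E\<^esub>"
      using w raag_inv_word_cancel[OF w(1)] by (simp add: RAAG_mult RAAG_one raag_class_eq_iff)
    show "raag_class V E (raag_inv_word w) \<in> carrier (RAAG V E)"
      using w by (intro raag_class_in_carrier) (auto simp: raag_words_def raag_inv_word_def)
  qed
qed (auto simp: RAAG_carrier RAAG_mult RAAG_one raag_words_def)

definition raag_letter :: "('g, 'z) monoid_scheme \<Rightarrow> ('v \<Rightarrow> 'g) \<Rightarrow> 'v \<times> bool \<Rightarrow> 'g" where
  "raag_letter S f p = (if snd p then f (fst p) else inv\<^bsub>S\<^esub> f (fst p))"

fun raag_eval :: "('g, 'z) monoid_scheme \<Rightarrow> ('v \<Rightarrow> 'g) \<Rightarrow> ('v \<times> bool) list \<Rightarrow> 'g" where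
  "raag_eval S f [] = \<one>\<^bsub>S\<^esub>"
| "raag_eval S f (p # w) = raag_letter S f p \<otimes>\<^bsub>S\<^esub> raag_eval S f w"

definition raag_hom :: "('g, 'z) monoid_scheme \<Rightarrow> ('v \<Rightarrow> 'g) \<Rightarrow> ('v \<times> bool) list set \<Rightarrow> 'g" where
  "raag_hom S f A = raag_eval S f (SOME w. w \<in> A)"

definition raag_gen :: "'v set \<Rightarrow> ('v \<Rightarrow> 'v \<Rightarrow> bool) \<Rightarrow> 'v \<Rightarrow> ('v \<times> bool) list set" where
  "raag_gen V E x = raag_class V E [(x, True)]"

context group
begin

context
  fixes f :: "'v \<Rightarrow> 'a" and V :: "'v set" and E :: "'v \<Rightarrow> 'v \<Rightarrow> bool"
  assumes f_carrier: "\<And>x. f x \<in> carrier G"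
    and f_commute: "\<And>x y. E x y \<Longrightarrow> f x \<otimes> f y = f y \<otimes> f x"
begin

lemma raag_letter_closed: "raag_letter G f p \<in> carrier G"
  by (simp add: raag_letter_def f_carrier)

lemma raag_eval_closed: "raag_eval G f w \<in> carrier G"
  by (induction w) (simp_all add: raag_letter_closed)

lemma raag_eval_append: "raag_eval G f (a @ b) = raag_eval G f a \<otimes> raag_eval G f b"
  by (induction a) (simp_all add: raag_letter_closed raag_eval_closed m_assoc)

lemma raag_letter_commute:
  assumes "E x y" shows "raag_letter G f (x, b) \<otimes> raag_letter G f (y, c) = raag_letter G f (y, c) \<otimes> raag_letter G f (x, b)"
proof -
  have xy: "f x \<otimes> f y = f y \<otimes> f x" using f_commute[OF assms] .
  have 1: "inv f x \<otimes> f y = f y \<otimes> inv f x" by (rule commute_inv_left[OF f_carrier f_carrier xy])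
  have 2: "inv f y \<otimes> f x = f x \<otimes> inv f y" by (rule commute_inv_left[OF f_carrier f_carrier xy[symmetric]])
  have 3: "inv f y \<otimes> inv f x = inv f x \<otimes> inv f y"
    by (rule commute_inv_left[OF f_carrier inv_closed[OF f_carrier] 1[symmetric]])
  show ?thesis using xy 1 2 3 by (cases b; cases c) (simp_all add: raag_letter_def)
qed

lemma raag_eval_step: "(a, b) \<in> raag_step V E \<Longrightarrow> raag_eval G f a = raag_eval G f b"
proof (induction rule: raag_step.induct)
  case (cancel x u b w)
  have "raag_eval G f ([(x, b), (x, \<not> b)] @ w) = raag_eval G f w"
    using f_carrier[of x] raag_eval_closed[of w]
    by (cases b) (simp_all add: raag_letter_def flip: m_assoc)
  then show ?case by (simp add: raag_eval_append del: raag_eval.simps)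
next
  case (commute x y u b c w)
  have "raag_eval G f ([(x, b), (y, c)] @ w) = raag_eval G f ([(y, c), (x, b)] @ w)"
    using raag_letter_commute[OF commute, of b c] raag_letter_closed raag_eval_closed
    by (simp flip: m_assoc)
  then show ?case by (simp add: raag_eval_append del: raag_eval.simps)
qed

lemma raag_eval_rel: "(a, b) \<in> raag_rel V E \<Longrightarrow> raag_eval G f a = raag_eval G f b"
  unfolding raag_rel_def
  by (induction rule: rtrancl_induct) (auto dest: raag_eval_step)

lemma raag_hom_class: "raag_hom G f (raag_class V E w) = raag_eval G f w"
proof -
  have "(SOME w'. w' \<in> raag_class V E w) \<in> raag_class V E w"
    by (rule someI[of _ w]) (simp add: raag_rel_refl)
  then have "(w, SOME w'. w' \<in> raag_class V E w) \<in> raag_rel V E" by simp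
  then show ?thesis unfolding raag_hom_def by (simp add: raag_eval_rel)
qed

lemma raag_hom_hom: "raag_hom G f \<in> hom (RAAG V E) G"
proof (rule homI)
  fix A assume "A \<in> carrier (RAAG V E)"
  then show "raag_hom G f A \<in> carrier G" by (auto simp: RAAG_carrier raag_hom_class raag_eval_closed)
next
  fix A B assume "A \<in> carrier (RAAG V E)" "B \<in> carrier (RAAG V E)"
  then show "raag_hom G f (A \<otimes>\<^bsub>RAAG V E\<^esub> B) = raag_hom G f A \<otimes> raag_hom G f B"
    by (auto simp: RAAG_carrier RAAG_mult raag_hom_class raag_eval_append)
qed

lemma raag_hom_gen: "raag_hom G f (raag_gen V E x) = f x"
  by (simp add: raag_gen_def raag_hom_class raag_letter_def f_carrier)

end

end

lemma raag_gen_in_carrier: "x \<in> V \<Longrightarrow> raag_gen V E x \<in> carrier (RAAG V E)"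
  by (simp add: raag_gen_def raag_class_in_carrier)

lemma raag_gen_inv:
  assumes x: "x \<in> V" shows "inv\<^bsub>RAAG V E\<^esub> raag_gen V E x = raag_class V E [(x, False)]"
proof (rule group.inv_equality[OF RAAG_group])
  have "([] @ [(x, False), (x, \<not> False)] @ [], [] @ []) \<in> raag_step V E"
    by (rule raag_step.cancel[OF x])
  then have "([(x, False), (x, True)], []) \<in> raag_rel V E" unfolding raag_rel_def by auto
  then show "raag_class V E [(x, False)] \<otimes>\<^bsub>RAAG V E\<^esub> raag_gen V E x = \<one>\<^bsub>RAAG V E\<^esub>"
    by (simp add: raag_gen_def RAAG_mult RAAG_one raag_class_eq_iff)
qed (use x in \<open>simp_all add: raag_gen_in_carrier raag_class_in_carrier\<close>)

lemma RAAG_generated_by_gens: "generate (RAAG V E) (raag_gen V E ` V) = carrier (RAAG V E)"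
proof
  interpret R: group "RAAG V E" by (rule RAAG_group)
  show "generate (RAAG V E) (raag_gen V E ` V) \<subseteq> carrier (RAAG V E)"
  proof
    fix g assume "g \<in> generate (RAAG V E) (raag_gen V E ` V)"
    then show "g \<in> carrier (RAAG V E)"
      by (rule R.generate_in_carrier[rotated]) (auto intro: raag_gen_in_carrier)
  qed
  have "raag_class V E w \<in> generate (RAAG V E) (raag_gen V E ` V)" if "set w \<subseteq> V \<times> UNIV" for w
    using that
  proof (induction w)
    case Nil then show ?case using generate.one[of "RAAG V E"] by (simp add: RAAG_one)
  next
    case (Cons p w)
    obtain x b where p: "p = (x, b)" by force
    with Cons.prems have x: "x \<in> V" by auto
    have gen: "raag_gen V E x \<in> generate (RAAG V E) (raag_gen V E ` V)"
      using x by (intro generate.incl) simp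
    have "raag_class V E [p] \<in> generate (RAAG V E) (raag_gen V E ` V)"
    proof (cases b)
      case True then show ?thesis using gen p by (simp add: raag_gen_def)
    next
      case False
      have "inv\<^bsub>RAAG V E\<^esub> raag_gen V E x \<in> generate (RAAG V E) (raag_gen V E ` V)"
        using x by (intro generate.inv) simp
      then show ?thesis using False p by (simp add: raag_gen_inv[OF x])
    qed
    from generate.eng[OF this Cons.IH] Cons.prems
    show ?case by (simp add: RAAG_mult)
  qed
  then show "carrier (RAAG V E) \<subseteq> generate (RAAG V E) (raag_gen V E ` V)"
    by (auto simp: RAAG_carrier raag_words_def)
qed

lemma raag_gen_commute:
  assumes "E x y"
  shows "raag_gen V E x \<otimes>\<^bsub>RAAG V E\<^esub> raag_gen V E y = raag_gen V E y \<otimes>\<^bsub>RAAG V E\<^esub> raag_gen V E x"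
proof -
  have "([] @ [(x, True), (y, True)] @ [], [] @ [(y, True), (x, True)] @ []) \<in> raag_step V E"
    by (rule raag_step.commute[where E = E and x = x and y = y, OF assms])
  then have "([(x, True), (y, True)], [(y, True), (x, True)]) \<in> raag_rel V E"
    unfolding raag_rel_def by auto
  then show ?thesis by (simp add: raag_gen_def RAAG_mult raag_class_eq_iff)
qed

lemma RAAG_noncomm_imp_non_edge:
  assumes "\<not> comm_group (RAAG V E)"
  obtains u v where "u \<in> V" "v \<in> V" "u \<noteq> v" "\<not> E u v"
proof -
  interpret R: group "RAAG V E" by (rule RAAG_group)
  have "comm_group (RAAG V E)" if complete: "\<forall>u\<in>V. \<forall>v\<in>V. u \<noteq> v \<longrightarrow> E u v"
  proof (rule R.comm_group_if_generators_commute[OF RAAG_generated_by_gens])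
    fix s t assume "s \<in> raag_gen V E ` V" "t \<in> raag_gen V E ` V"
    then obtain x y where "x \<in> V" "y \<in> V" "s = raag_gen V E x" "t = raag_gen V E y" by blast
    then show "s \<otimes>\<^bsub>RAAG V E\<^esub> t = t \<otimes>\<^bsub>RAAG V E\<^esub> s"
      using complete raag_gen_commute[of E x y V] by (cases "x = y") auto
  qed
  with assms that show thesis by blast
qed

lemma RAAG_onto_sym_group:
  assumes u: "u \<in> V" and v: "v \<in> V" and uv: "u \<noteq> v" "\<not> E u v"
    and E_sym: "\<And>x y. E x y \<Longrightarrow> E y x" and N: "2 \<le> N"
  obtains \<rho> where "\<rho> \<in> hom (RAAG V E) (sym_group N)" "\<rho> ` carrier (RAAG V E) = carrier (sym_group N)"
proof -
  interpret S: group "sym_group N" by (rule sym_group_is_group)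
  define f where
    "f x = (if x = u then Transposition.transpose 1 2 else if x = v then cycle_perm N else id)" for x
  have f_carrier: "f x \<in> carrier (sym_group N)" for x
    unfolding f_def sym_group_carrier using N cycle_perm_permutes[of N]
    by (auto intro: permutes_swap_id permutes_id)
  have f_commute: "f x \<otimes>\<^bsub>sym_group N\<^esub> f y = f y \<otimes>\<^bsub>sym_group N\<^esub> f x" if "E x y" for x y
  proof -
    have "\<not> (x = u \<and> y = v)" "\<not> (x = v \<and> y = u)" using that uv E_sym by blast+
    then have "x = y \<or> f x = id \<or> f y = id" unfolding f_def by auto
    then show ?thesis by (auto simp: sym_group_mult)
  qed
  let ?\<rho> = "raag_hom (sym_group N) f"
  have hom: "?\<rho> \<in> hom (RAAG V E) (sym_group N)"
    using f_carrier f_commute by (rule S.raag_hom_hom)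
  have gen: "?\<rho> (raag_gen V E x) = f x" for x
    using f_carrier f_commute by (rule S.raag_hom_gen)
  interpret \<rho>: group_hom "RAAG V E" "sym_group N" ?\<rho>
    by (intro group_hom.intro group_hom_axioms.intro RAAG_group S.is_group hom)
  have "?\<rho> ` carrier (RAAG V E) = carrier (sym_group N)"
  proof (rule subgroup_eq_sym_group[OF N \<rho>.img_is_subgroup])
    show "Transposition.transpose 1 2 \<in> ?\<rho> ` carrier (RAAG V E)"
      using gen[of u] raag_gen_in_carrier[OF u] by (force simp: f_def)
    show "cycle_perm N \<in> ?\<rho> ` carrier (RAAG V E)"
      using gen[of v] raag_gen_in_carrier[OF v] uv by (force simp: f_def)
  qed
  with hom show thesis by (rule that)
qed

theorem proposition1p7:
  fixes V :: "'v set" and E :: "'v \<Rightarrow> 'v \<Rightarrow> bool"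
  assumes "finite V"
    and "\<And>x y. E x y \<Longrightarrow> x \<in> V \<and> y \<in> V"
    and "\<And>x y. E x y \<Longrightarrow> E y x"
    and "\<And>x. \<not> E x x"
    and "\<not> comm_group (RAAG V E)"
  shows "involves_all_finite_groups (AutoGroup (RAAG V E))"
proof (rule involves_all_finite_groupsI)
  fix F :: "nat monoid" assume F: "group F" "finite (carrier F)"
  obtain u v where uv: "u \<in> V" "v \<in> V" "u \<noteq> v" "\<not> E u v"
    using RAAG_noncomm_imp_non_edge[OF assms(5)] .
  define N where "N = card (carrier F) + 1"
  have "carrier F \<noteq> {}" using group.is_monoid[OF F(1)] monoid.one_closed by blast
  then have N: "card (carrier F) < N" "2 \<le> N"
    using F(2) by (simp_all add: N_def Suc_leI card_gt_0_iff)
  obtain L where L: "L \<in> hom F (sym_group N)"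
    and central: "\<And>f. f \<in> carrier F \<Longrightarrow>
      (\<And>s. s \<in> carrier (sym_group N) \<Longrightarrow> L f \<otimes>\<^bsub>sym_group N\<^esub> s = s \<otimes>\<^bsub>sym_group N\<^esub> L f)
      \<Longrightarrow> f = \<one>\<^bsub>F\<^esub>"
    using sym_group_regular_embedding[OF F N(1)] by blast
  obtain \<rho> where \<rho>: "\<rho> \<in> hom (RAAG V E) (sym_group N)"
    "\<rho> ` carrier (RAAG V E) = carrier (sym_group N)"
    using RAAG_onto_sym_group[where E = E, OF uv assms(3) N(2)] by blast
  have "finite (carrier (sym_group N))" by (simp add: sym_group_def finite_permutations)
  then interpret inner_descent "RAAG V E" "sym_group N" F \<rho> L "raag_gen V E ` V"
    using \<rho> L central assms(1)
    by (intro inner_descent.intro inner_descent_axioms.intro RAAG_group sym_group_is_group F(1))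
      (simp_all add: RAAG_generated_by_gens)
  show "involves (AutoGroup (RAAG V E)) F" by (rule involves_AutoGroup)
qed

end
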